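(* Let $n\ge 3$ be an integer. Consider the map $\ell\mapsto Y(\ell)$ sending the vector $\ell=(\ell_{ij})_{1\le i<j\le n+1}$ of edge-lengths of an $n$-simplex with vertices $v_1,\dots,v_{n+1}$ to the vector $Y=(Y_F)_F$, where $F$ ranges over the $(n-1)$-element subsets of $\{1,\dots,n+1\}$ and $Y_F$ is the $(n-2)$-dimensional volume of the face $\mathrm{conv}\{v_i:i\in F\}$. Let $p_1$ be the point with all $\ell_{ij}=1$ (the regular simplex with unit edges), and let $J(p_1)=\partial Y/\partial \ell$ be the Jacobian at $p_1$. Let $M$ be the matrix with rows indexed by edges $e=\{i,j\}$ and columns indexed by faces $F$, with $M_{e,F}=1$ if $e\subseteq F$ and $M_{e,F}=0$ otherwise. Then \[ J(p_1)=\frac{1}{(n-2)!\,(n-1)^{1/2}\,2^{(n-4)/2}}\,M . \]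
   Context: An edge $\{i,j\}$ is incident with the $(n-2)$-face indexed by $F$ when $\{i,j\}\subseteq F$. *)

theory Defs
  imports Complex_Main "Jordan_Normal_Form.Determinant"
begin

text \<open>Vertices of the n-simplex are labelled 1..n+1. An edge-length vector is a
function on pairs (i,j) with i < j; only its values on edges matter.\<close>

definition edges :: "nat \<Rightarrow> (nat \<times> nat) set" where
  "edges n = {(i,j). 1 \<le> i \<and> i < j \<and> j \<le> n + 1}"

definition faces :: "nat \<Rightarrow> nat set set" where
  "faces n = {F. F \<subseteq> {1..n+1} \<and> card F = n - 1}"

definition elen :: "(nat \<times> nat \<Rightarrow> real) \<Rightarrow> nat \<Rightarrow> nat \<Rightarrow> real" where
  "elen l i j = l (min i j, max i j)"

text \<open>Gram matrix of the edge vectors v_{a_p} - v_{a_0}, p = 1..k, of the simplex with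
vertex list a_0,...,a_k, expressed through the edge lengths (polarization identity).\<close>
definition gram_of_lengths :: "(nat \<times> nat \<Rightarrow> real) \<Rightarrow> nat list \<Rightarrow> real mat" where
  "gram_of_lengths l as =
     (let k = length as - 1; a0 = as ! 0 in
      mat k k (\<lambda>(p,q).
        ((elen l a0 (as ! (p+1)))\<^sup>2 + (elen l a0 (as ! (q+1)))\<^sup>2
          - (if p = q then 0 else (elen l (as ! (p+1)) (as ! (q+1)))\<^sup>2)) / 2))"

definition face_volume :: "(nat \<times> nat \<Rightarrow> real) \<Rightarrow> nat set \<Rightarrow> real" where
  "face_volume l F =
     sqrt (det (gram_of_lengths l (sorted_list_of_set F))) / fact (card F - 1)"

definition incid :: "nat \<times> nat \<Rightarrow> nat set \<Rightarrow> real" where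
  "incid e F = (if {fst e, snd e} \<subseteq> F then 1 else 0)"

end

theory Submission
  imports Defs
begin

text \<open>A face with \<open>k + 1\<close> vertices has volume \<open>sqrt (det G) / k!\<close>, where \<open>G\<close> is the Gram matrix
  of the edge vectors issuing from its first vertex. If the varied edge does not lie in the face,
  \<open>G\<close> does not depend on its length. Otherwise \<open>2 G = I + J\<close> at the regular simplex, so
  \<open>det G = (k + 1) / 2^k\<close>, and changing the length of one edge to \<open>t\<close> alters \<open>2 G\<close> in at most
  two rows and columns; multilinear expansion shows that \<open>det G\<close> is a polynomial in \<open>t\<close> with
  derivative \<open>4 / 2^k\<close> at \<open>t = 1\<close>, whether or not the edge contains the first vertex.
  The chain rule for the square root then gives the constant.\<close>

section \<open>Row operations on determinants\<close>

lemma det_mat_row_add: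
  assumes "m < k"
  shows "det (mat k k (\<lambda>(i,j). if i = m then f j + g j else h i j) :: 'a :: comm_ring_1 mat)
       = det (mat k k (\<lambda>(i,j). if i = m then f j else h i j))
       + det (mat k k (\<lambda>(i,j). if i = m then g j else h i j))"
proof -
  have rows: "\<And>f. mat k k (\<lambda>(i,j). if i = m then f j else h i j) =
     mat\<^sub>r k k (\<lambda>i. if i = m then vec k f else vec k (h i))"
    by (rule eq_matI) auto
  have "mat k k (\<lambda>(i,j). if i = m then f j + g j else h i j) =
     mat\<^sub>r k k (\<lambda>i. if i = m then vec k f + vec k g else vec k (h i))"
    by (rule eq_matI) auto
  then show ?thesis unfolding rows
    using det_row_add[of "\<lambda>_. vec k f" m k "\<lambda>_. vec k g"] assms by auto
qed

lemma det_mat_row_scale: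
  assumes "m < k"
  shows "det (mat k k (\<lambda>(i,j). if i = m then c * f j else h i j) :: 'a :: comm_ring_1 mat)
       = c * det (mat k k (\<lambda>(i,j). if i = m then f j else h i j))"
proof -
  have "mat k k (\<lambda>(i,j). if i = m then c * f j else h i j) =
        multrow m c (mat k k (\<lambda>(i,j). if i = m then f j else h i j))"
    by (rule eq_matI) (auto simp: mat_multrow_gen_def)
  then show ?thesis using det_multrow[OF assms, of _ c] by simp
qed

lemma det_mat_cong:
  assumes "\<And>i j. i < k \<Longrightarrow> j < k \<Longrightarrow> M i j = N i j"
  shows "det (mat k k (\<lambda>(i,j). M i j)) = det (mat k k (\<lambda>(i,j). N i j))"
  by (rule arg_cong[where f = det], rule eq_matI) (auto simp: assms)

lemma det_mat_row_lincomb: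
  assumes "m < k"
    and "\<And>i j. i < k \<Longrightarrow> j < k \<Longrightarrow> M i j = (if i = m then f j + c * g j else h i j)"
  shows "det (mat k k (\<lambda>(i,j). M i j) :: 'a :: comm_ring_1 mat)
       = det (mat k k (\<lambda>(i,j). if i = m then f j else h i j))
       + c * det (mat k k (\<lambda>(i,j). if i = m then g j else h i j))"
proof -
  have "mat k k (\<lambda>(i,j). M i j) = mat k k (\<lambda>(i,j). if i = m then f j + c * g j else h i j)"
    by (rule eq_matI) (use assms(2) in auto)
  then show ?thesis
    using det_mat_row_add[OF assms(1), of f "\<lambda>j. c * g j" h] det_mat_row_scale[OF assms(1)]
    by simp
qed

lemma det_mat_row_mult:
  assumes "m < k"
    and "\<And>i j. i < k \<Longrightarrow> j < k \<Longrightarrow> M i j = (if i = m then c * g j else h i j)"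
  shows "det (mat k k (\<lambda>(i,j). M i j) :: 'a :: comm_ring_1 mat)
       = c * det (mat k k (\<lambda>(i,j). if i = m then g j else h i j))"
  using det_mat_cong[of k M, OF assms(2)] det_mat_row_scale[OF assms(1)] by simp

lemma det_mat_equal_rows:
  assumes "m < k" "m' < k" "m \<noteq> m'" "\<And>j. j < k \<Longrightarrow> M m j = M m' j"
  shows "det (mat k k (\<lambda>(i,j). M i j) :: 'a :: comm_ring_1 mat) = 0"
  by (rule det_identical_rows[of _ k m m']) (use assms in \<open>auto intro!: eq_vecI\<close>)

lemma det_mat_row_unit:
  assumes "m < Suc k" "\<And>j. j < Suc k \<Longrightarrow> M m j = (if j = m then 1 else 0)"
    and "\<And>i j. i < k \<Longrightarrow> j < k \<Longrightarrow>
           M (if i < m then i else Suc i) (if j < m then j else Suc j) = N i j"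
  shows "det (mat (Suc k) (Suc k) (\<lambda>(i,j). M i j) :: 'a :: comm_ring_1 mat)
       = det (mat k k (\<lambda>(i,j). N i j))"
proof -
  let ?A = "mat (Suc k) (Suc k) (\<lambda>(i,j). M i j) :: 'a mat"
  have "det ?A = (\<Sum>j<Suc k. ?A $$ (m,j) * cofactor ?A m j)"
    by (rule laplace_expansion_row) (use assms in auto)
  also have "\<dots> = (\<Sum>j<Suc k. if j = m then cofactor ?A m m else 0)"
    by (rule sum.cong) (use assms in auto)
  also have "\<dots> = det (mat_delete ?A m m)"
    using assms unfolding cofactor_def by (simp flip: mult_2)
  also have "mat_delete ?A m m = mat k k (\<lambda>(i,j). N i j)"
    unfolding mat_delete_def by (rule eq_matI) (use assms in auto)
  finally show ?thesis .
qed

section \<open>The matrix \<open>I + J\<close>\<close>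

lemma det_id_plus_ones_first_row_ones:
  "det (mat (Suc k) (Suc k) (\<lambda>(i,j). if i = 0 then 1 else if i = j then 2 else 1) :: real mat) = 1"
proof (induction k)
  case 0
  then show ?case by (subst det_single) auto
next
  case (Suc k)
  let ?h = "\<lambda>i j. if i = 0 then 1 else if i = j then 2 else (1::real)"
  let ?n = "Suc (Suc k)"
  have "det (mat ?n ?n (\<lambda>(i,j). ?h i j))
     = det (mat ?n ?n (\<lambda>(i,j). if i = 1 then (if j = 1 then 1 else 0) else ?h i j))
     + 1 * det (mat ?n ?n (\<lambda>(i,j). if i = 1 then ?h 0 j else ?h i j))"
    by (rule det_mat_row_lincomb) auto
  also have "det (mat ?n ?n (\<lambda>(i,j). if i = 1 then ?h 0 j else ?h i j)) = 0"
    by (rule det_mat_equal_rows[of 1 _ 0]) auto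
  also have "det (mat ?n ?n (\<lambda>(i,j). if i = 1 then (if j = 1 then 1 else 0) else ?h i j))
     = det (mat (Suc k) (Suc k) (\<lambda>(i,j). ?h i j))"
    by (rule det_mat_row_unit[of 1]) auto
  finally show ?case using Suc by simp
qed

lemma det_id_plus_ones:
  "det (mat k k (\<lambda>(i,j). if i = j then 2 else 1) :: real mat) = real k + 1"
proof (induction k)
  case 0
  then show ?case by (subst det_dim_zero) auto
next
  case (Suc k)
  let ?h = "\<lambda>i j. if i = j then 2 else (1::real)"
  have "det (mat (Suc k) (Suc k) (\<lambda>(i,j). ?h i j))
     = det (mat (Suc k) (Suc k) (\<lambda>(i,j). if i = 0 then (if j = 0 then 1 else 0) else ?h i j))
     + 1 * det (mat (Suc k) (Suc k) (\<lambda>(i,j). if i = 0 then 1 else ?h i j))"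
    by (rule det_mat_row_lincomb) auto
  also have "det (mat (Suc k) (Suc k) (\<lambda>(i,j). if i = 0 then 1 else ?h i j)) = 1"
    using det_id_plus_ones_first_row_ones[of k] by simp
  also have "det (mat (Suc k) (Suc k) (\<lambda>(i,j). if i = 0 then (if j = 0 then 1 else 0) else ?h i j))
     = det (mat k k (\<lambda>(i,j). ?h i j))"
    by (rule det_mat_row_unit[of 0]) auto
  finally show ?case using Suc by simp
qed

lemma det_id_plus_ones_row_diag_unit:
  assumes "a < k"
  shows "det (mat k k (\<lambda>(i,j). if i = a then (if j = a then 1 else 0) else if i = j then 2 else 1)
           :: real mat) = real k"
proof -
  obtain k' where k: "k = Suc k'" using assms by (cases k) auto
  have "det (mat k k (\<lambda>(i,j). if i = a then (if j = a then 1 else 0) else if i = j then 2 else 1))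
     = det (mat k' k' (\<lambda>(i,j). if i = j then 2 else (1::real)))"
    unfolding k by (rule det_mat_row_unit[of a]) (use assms k in auto)
  then show ?thesis using det_id_plus_ones[of k'] k by simp
qed

lemma det_id_plus_ones_row_ones:
  assumes "a < k"
  shows "det (mat k k (\<lambda>(i,j). if i = a then 1 else if i = j then 2 else 1) :: real mat) = 1"
proof -
  let ?h = "\<lambda>i j. if i = j then 2 else (1::real)"
  have "det (mat k k (\<lambda>(i,j). if i = a then 1 else ?h i j))
      = det (mat k k (\<lambda>(i,j). if i = a then ?h a j else ?h i j))
      + (-1) * det (mat k k (\<lambda>(i,j). if i = a then (if j = a then 1 else 0) else ?h i j))"
    by (rule det_mat_row_lincomb[OF assms]) auto
  also have "det (mat k k (\<lambda>(i,j). if i = a then ?h a j else ?h i j)) = det (mat k k (\<lambda>(i,j). ?h i j))"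
    by (rule det_mat_cong) auto
  finally show ?thesis using det_id_plus_ones[of k] det_id_plus_ones_row_diag_unit[OF assms] by simp
qed

lemma det_id_plus_ones_row_unit:
  assumes "a < k" "b < k"
  shows "det (mat k k (\<lambda>(i,j). if i = a then (if j = b then 1 else 0) else if i = j then 2 else 1)
           :: real mat) = (if a = b then real k else -1)"
proof (cases "a = b")
  case False
  let ?h = "\<lambda>i j. if i = j then 2 else (1::real)"
  have "det (mat k k (\<lambda>(i,j). if i = a then (if j = b then 1 else 0) else ?h i j))
      = det (mat k k (\<lambda>(i,j). if i = a then ?h b j else ?h i j))
      + (-1) * det (mat k k (\<lambda>(i,j). if i = a then 1 else ?h i j))"
    by (rule det_mat_row_lincomb[OF assms(1)]) auto
  also have "det (mat k k (\<lambda>(i,j). if i = a then ?h b j else ?h i j)) = 0"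
    by (rule det_mat_equal_rows[of a _ b]) (use assms False in auto)
  finally show ?thesis using False det_id_plus_ones_row_ones[OF assms(1)] by simp
qed (use assms det_id_plus_ones_row_diag_unit in simp)

lemma det_id_plus_ones_two_rows_diag_unit:
  assumes "p < q" "q < k"
  shows "det (mat k k (\<lambda>(i,j). if i = p then (if j = p then 1 else 0) else
       if i = q then (if j = q then 1 else 0) else if i = j then 2 else 1) :: real mat) = real k - 1"
proof -
  obtain k' where k: "k = Suc k'" using assms by (cases k) auto
  have "det (mat k k (\<lambda>(i,j). if i = p then (if j = p then 1 else 0) else
       if i = q then (if j = q then 1 else 0) else if i = j then 2 else 1))
    = det (mat k' k' (\<lambda>(i,j). if i = q - 1 then (if j = q - 1 then 1 else 0)
                             else if i = j then 2 else (1::real)))"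
    unfolding k by (rule det_mat_row_unit[of p]) (use assms k in auto)
  also have "\<dots> = real k'"
    by (rule det_id_plus_ones_row_diag_unit) (use assms k in auto)
  finally show ?thesis using k by simp
qed

lemma det_id_plus_ones_two_rows_swapped_unit:
  assumes "p < q" "q < k"
  shows "det (mat k k (\<lambda>(i,j). if i = q then (if j = p then 1 else 0) else
       if i = p then (if j = q then 1 else 0) else if i = j then 2 else 1) :: real mat) = 1 - real k"
proof -
  let ?M = "mat k k (\<lambda>(i,j). if i = q then (if j = p then 1 else 0) else
       if i = p then (if j = q then 1 else 0) else if i = j then 2 else (1::real))"
  have "swaprows p q ?M = mat k k (\<lambda>(i,j). if i = p then (if j = p then 1 else 0) else
       if i = q then (if j = q then 1 else 0) else if i = j then 2 else 1)"
    by (rule eq_matI) (use assms in \<open>auto simp: mat_swaprows_def\<close>)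
  moreover have "det (swaprows p q ?M) = - det ?M"
    by (rule det_swaprows) (use assms in auto)
  ultimately show ?thesis
    using det_id_plus_ones_two_rows_diag_unit[OF assms] by simp
qed

lemma det_id_plus_ones_row_col_scaled:
  assumes "m < k"
  shows "det (mat k k (\<lambda>(p,q). (if p = m then t else 1)\<^sup>2 + (if q = m then t else 1)\<^sup>2
              - (if p = q then 0 else 1)) :: real mat)
     = t\<^sup>2 * (real k + 1 + (t\<^sup>2 - 1) * (1 - real k))"
proof -
  let ?h = "\<lambda>p q. if p = q then 2 else (1::real)"
  let ?N = "mat k k (\<lambda>(p,q). if p = m then ?h m q else if q = m then t\<^sup>2 else ?h p q)"
  have "det (mat k k (\<lambda>(p,q). (if p = m then t else 1)\<^sup>2 + (if q = m then t else 1)\<^sup>2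
              - (if p = q then 0 else 1)))
     = t\<^sup>2 * det ?N"
    by (rule det_mat_row_mult[OF assms]) auto
  \<comment> \<open>Now only column \<open>m\<close> differs from \<open>I + J\<close>; transpose to expand it as a row.\<close>
  also have "det ?N = det ?N\<^sup>T"
    by (rule det_transpose[symmetric]) auto
  also have "\<dots> = det (mat k k (\<lambda>(p,q). if p = m then ?h m q else ?h p q))
      + (t\<^sup>2 - 1) * det (mat k k (\<lambda>(p,q). if p = m then (if q = m then 0 else 1) else ?h p q))"
    unfolding transpose_mat_def dim_row_mat dim_col_mat by (rule det_mat_row_lincomb[OF assms]) auto
  also have "det (mat k k (\<lambda>(p,q). if p = m then (if q = m then 0 else 1) else ?h p q))
      = det (mat k k (\<lambda>(p,q). if p = m then ?h m q else ?h p q))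
      + (-2) * det (mat k k (\<lambda>(p,q). if p = m then (if q = m then 1 else 0) else ?h p q))"
    by (rule det_mat_row_lincomb[OF assms]) auto
  also have "det (mat k k (\<lambda>(p,q). if p = m then ?h m q else ?h p q)) = det (mat k k (\<lambda>(p,q). ?h p q))"
    by (rule det_mat_cong) auto
  finally show ?thesis
    using det_id_plus_ones[of k] det_id_plus_ones_row_unit[OF assms assms] by (simp add: algebra_simps)
qed

lemma det_id_plus_ones_pair_perturbed:
  assumes "p < q" "q < k"
  shows "det (mat k k (\<lambda>(a,b). if a = b then 2 else if {a,b} = {p,q} then 2 - t\<^sup>2 else 1) :: real mat)
     = real k + 1 - 2 * (1 - t\<^sup>2) - (real k - 1) * (1 - t\<^sup>2)\<^sup>2"
proof -
  have p: "p < k" using assms by simp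
  let ?c = "1 - t\<^sup>2"
  let ?h = "\<lambda>a b. if a = b then 2 else (1::real)"
  let ?e = "\<lambda>x b. if b = x then 1 else (0::real)"
  \<comment> \<open>Rows \<open>p\<close> and \<open>q\<close> are rows of \<open>I + J\<close> plus \<open>c\<close> times a unit vector; expand multilinearly.\<close>
  have "det (mat k k (\<lambda>(a,b). if a = b then 2 else if {a,b} = {p,q} then 2 - t\<^sup>2 else 1))
      = det (mat k k (\<lambda>(a,b). if a = p then ?h p b else if a = q then ?h q b + ?c * ?e p b else ?h a b))
      + ?c * det (mat k k (\<lambda>(a,b). if a = p then ?e q b else if a = q then ?h q b + ?c * ?e p b else ?h a b))"
    by (rule det_mat_row_lincomb[OF p]) (use assms in \<open>auto simp: doubleton_eq_iff\<close>)
  also have "det (mat k k (\<lambda>(a,b). if a = p then ?h p b else if a = q then ?h q b + ?c * ?e p b else ?h a b))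
      = det (mat k k (\<lambda>(a,b). if a = q then ?h q b else ?h a b))
      + ?c * det (mat k k (\<lambda>(a,b). if a = q then ?e p b else ?h a b))"
    by (rule det_mat_row_lincomb[OF assms(2)]) (use assms in auto)
  also have "det (mat k k (\<lambda>(a,b). if a = p then ?e q b else if a = q then ?h q b + ?c * ?e p b else ?h a b))
      = det (mat k k (\<lambda>(a,b). if a = q then ?h q b else if a = p then ?e q b else ?h a b))
      + ?c * det (mat k k (\<lambda>(a,b). if a = q then ?e p b else if a = p then ?e q b else ?h a b))"
    by (rule det_mat_row_lincomb[OF assms(2)]) (use assms in auto)
  also have "det (mat k k (\<lambda>(a,b). if a = q then ?h q b else ?h a b)) = det (mat k k (\<lambda>(a,b). ?h a b))"
    by (rule det_mat_cong) auto
  also have "\<dots> = real k + 1"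
    by (rule det_id_plus_ones)
  finally have expansion: "det (mat k k (\<lambda>(a,b). if a = b then 2 else if {a,b} = {p,q} then 2 - t\<^sup>2 else 1))
      = real k + 1 + ?c * det (mat k k (\<lambda>(a,b). if a = q then ?e p b else ?h a b))
      + ?c * (det (mat k k (\<lambda>(a,b). if a = q then ?h q b else if a = p then ?e q b else ?h a b))
      + ?c * det (mat k k (\<lambda>(a,b). if a = q then ?e p b else if a = p then ?e q b else ?h a b)))" .
  have row_q_restored: "det (mat k k (\<lambda>(a,b). if a = q then ?h q b else if a = p then ?e q b else ?h a b))
      = det (mat k k (\<lambda>(a,b). if a = p then ?e q b else ?h a b))"
    by (rule det_mat_cong) (use assms in auto)
  have rows_swapped: "det (mat k k (\<lambda>(a,b). if a = q then ?e p b else if a = p then ?e q b else ?h a b)) = 1 - real k"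
    using det_id_plus_ones_two_rows_swapped_unit[OF assms] by simp
  have row_p: "det (mat k k (\<lambda>(a,b). if a = p then ?e q b else ?h a b)) = -1"
    using det_id_plus_ones_row_unit[of p k q] assms by simp
  have row_q: "det (mat k k (\<lambda>(a,b). if a = q then ?e p b else ?h a b)) = -1"
    using det_id_plus_ones_row_unit[of q k p] assms by simp
  show ?thesis
    unfolding expansion row_q_restored rows_swapped row_p row_q by (simp add: algebra_simps power2_eq_square)
qed

section \<open>Gram matrices of simplices with one perturbed edge\<close>

definition gram_of_dists :: "nat \<Rightarrow> (nat \<Rightarrow> nat \<Rightarrow> real) \<Rightarrow> real mat" where
  "gram_of_dists k d = mat k k (\<lambda>(p,q).
     ((d 0 (Suc p))\<^sup>2 + (d 0 (Suc q))\<^sup>2 - (if p = q then 0 else (d (Suc p) (Suc q))\<^sup>2)) / 2)"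

definition one_edge_dists :: "nat \<Rightarrow> nat \<Rightarrow> real \<Rightarrow> nat \<Rightarrow> nat \<Rightarrow> real" where
  "one_edge_dists r s t a b = (if {a, b} = {r, s} then t else 1)"

lemma one_edge_dists_commute: "one_edge_dists r s = one_edge_dists s r"
  unfolding one_edge_dists_def by (simp add: insert_commute)

lemma one_edge_dists_one [simp]: "one_edge_dists r s 1 = (\<lambda>_ _. 1)"
  unfolding one_edge_dists_def by auto

lemma gram_of_lengths_eq_gram_of_dists:
  assumes "length as = Suc k"
    and "\<And>a b. a < Suc k \<Longrightarrow> b < Suc k \<Longrightarrow> a \<noteq> b \<Longrightarrow> elen l (as ! a) (as ! b) = d a b"
  shows "gram_of_lengths l as = gram_of_dists k d"
  unfolding gram_of_lengths_def gram_of_dists_def Let_def assms(1)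
  by (rule eq_matI) (auto simp: assms(2))

lemma elen_edge_update:
  assumes "i < j"
  shows "elen ((\<lambda>_. 1)((i,j) := t)) x y = (if {x, y} = {i, j} then t else 1)"
  using assms unfolding elen_def by (auto simp: min_def max_def doubleton_eq_iff)

lemma gram_of_lengths_edge_update:
  assumes "distinct as" "length as = Suc k" "r < Suc k" "s < Suc k" "as ! r < as ! s"
  shows "gram_of_lengths ((\<lambda>_. 1)((as ! r, as ! s) := t)) as = gram_of_dists k (one_edge_dists r s t)"
proof (rule gram_of_lengths_eq_gram_of_dists[OF assms(2)])
  fix a b assume "a < Suc k" "b < Suc k"
  then have "{as ! a, as ! b} = {as ! r, as ! s} \<longleftrightarrow> {a, b} = {r, s}"
    using assms by (auto simp: doubleton_eq_iff nth_eq_iff_index_eq)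
  then show "elen ((\<lambda>_. 1)((as ! r, as ! s) := t)) (as ! a) (as ! b) = one_edge_dists r s t a b"
    unfolding elen_edge_update[OF assms(5)] one_edge_dists_def by simp
qed

lemma gram_of_lengths_edge_update_outside:
  assumes "length as = Suc k" "i < j" "\<not> {i, j} \<subseteq> set as"
  shows "gram_of_lengths ((\<lambda>_. 1)((i,j) := t)) as = gram_of_dists k (\<lambda>_ _. 1)"
proof (rule gram_of_lengths_eq_gram_of_dists[OF assms(1)])
  fix a b assume "a < Suc k" "b < Suc k"
  then have "{as ! a, as ! b} \<noteq> {i, j}"
    using assms nth_mem by (metis insert_subsetI empty_subsetI)
  then show "elen ((\<lambda>_. 1)((i,j) := t)) (as ! a) (as ! b) = 1"
    unfolding elen_edge_update[OF assms(2)] by simp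
qed

lemma det_gram_unit_dists: "det (gram_of_dists k (\<lambda>_ _. 1)) = (real k + 1) / 2 ^ k"
proof -
  have "gram_of_dists k (\<lambda>_ _. 1) = (1/2) \<cdot>\<^sub>m mat k k (\<lambda>(p,q). if p = q then 2 else 1)"
    unfolding gram_of_dists_def by (rule eq_matI) auto
  then show ?thesis using det_id_plus_ones[of k] by (simp add: power_one_over)
qed

lemma det_gram_one_edge_at_base:
  assumes "m < k"
  shows "det (gram_of_dists k (one_edge_dists 0 (Suc m) t))
       = t\<^sup>2 * (real k + 1 + (t\<^sup>2 - 1) * (1 - real k)) / 2 ^ k"
proof -
  have "gram_of_dists k (one_edge_dists 0 (Suc m) t) = (1/2) \<cdot>\<^sub>m mat k k (\<lambda>(p,q).
          (if p = m then t else 1)\<^sup>2 + (if q = m then t else 1)\<^sup>2 - (if p = q then 0 else 1))"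
    unfolding gram_of_dists_def one_edge_dists_def by (rule eq_matI) auto
  then show ?thesis
    using det_id_plus_ones_row_col_scaled[OF assms, of t] by (simp add: power_one_over)
qed

lemma det_gram_one_edge_off_base:
  assumes "p < q" "q < k"
  shows "det (gram_of_dists k (one_edge_dists (Suc p) (Suc q) t))
       = (real k + 1 - 2 * (1 - t\<^sup>2) - (real k - 1) * (1 - t\<^sup>2)\<^sup>2) / 2 ^ k"
proof -
  have "gram_of_dists k (one_edge_dists (Suc p) (Suc q) t) = (1/2) \<cdot>\<^sub>m
          mat k k (\<lambda>(a,b). if a = b then 2 else if {a,b} = {p,q} then 2 - t\<^sup>2 else 1)"
    unfolding gram_of_dists_def one_edge_dists_def
    by (rule eq_matI) (use assms in \<open>auto simp: doubleton_eq_iff\<close>)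
  then show ?thesis
    using det_id_plus_ones_pair_perturbed[OF assms, of t] by (simp add: power_one_over)
qed

lemma has_real_derivative_det_gram_one_edge:
  assumes "r \<noteq> s" "r \<le> k" "s \<le> k"
  shows "((\<lambda>t. det (gram_of_dists k (one_edge_dists r s t))) has_real_derivative 4 / 2 ^ k) (at 1)"
proof -
  have ordered: "((\<lambda>t. det (gram_of_dists k (one_edge_dists r s t))) has_real_derivative 4 / 2 ^ k) (at 1)"
    if rs: "r < s" "s \<le> k" for r s
  proof (cases r)
    case 0
    then obtain m where m: "s = Suc m" "m < k" using rs by (cases s) auto
    have "((\<lambda>t. t\<^sup>2 * (real k + 1 + (t\<^sup>2 - 1) * (1 - real k)) / 2 ^ k) has_real_derivative
           (2 * (real k + 1) + 2 * (1 - real k)) / 2 ^ k) (at 1)"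
      by (auto intro!: derivative_eq_intros)
    then show ?thesis using 0 m det_gram_one_edge_at_base[OF m(2)] by (simp add: algebra_simps)
  next
    case (Suc p)
    then obtain q where q: "s = Suc q" "p < q" "q < k" using rs by (cases s) auto
    have "((\<lambda>t. (real k + 1 - 2 * (1 - t\<^sup>2) - (real k - 1) * (1 - t\<^sup>2)\<^sup>2) / 2 ^ k) has_real_derivative
           (2 * 2) / 2 ^ k) (at 1)"
      by (auto intro!: derivative_eq_intros)
    then show ?thesis using Suc q det_gram_one_edge_off_base[OF q(2,3)] by simp
  qed
  show ?thesis
  proof (cases "r < s")
    case False
    then show ?thesis
      unfolding one_edge_dists_commute[of r s] by (intro ordered) (use assms in auto)
  qed (use assms ordered in auto)
qed

lemma has_real_derivative_sqrt_gram_volume: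
  assumes "f 1 = (real k + 1) / 2 ^ k" "(f has_real_derivative 4 / 2 ^ k) (at 1)"
  shows "((\<lambda>t. sqrt (f t) / fact k) has_real_derivative
           1 / (fact k * sqrt (real k + 1) * 2 powr ((real k - 2) / 2))) (at 1)"
proof -
  have pos: "0 < f 1" using assms(1) by simp
  have "((\<lambda>t. sqrt (f t) / fact k) has_real_derivative
          inverse (sqrt (f 1)) / 2 * (4 / 2 ^ k) / fact k) (at 1)"
    by (intro DERIV_cdivide DERIV_chain2[OF DERIV_real_sqrt[OF pos] assms(2)])
  moreover have "inverse (sqrt (f 1)) / 2 * (4 / 2 ^ k) / fact k
      = 1 / (fact k * sqrt (real k + 1) * 2 powr ((real k - 2) / 2))"
  proof -
    have two_pow: "(2::real) ^ k = 2 powr (real k / 2) * 2 powr (real k / 2)"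
      by (simp add: powr_realpow flip: powr_add)
    have sqrt_f: "sqrt (f 1) = sqrt (real k + 1) / 2 powr (real k / 2)"
      unfolding assms(1) two_pow by (simp add: real_sqrt_divide real_sqrt_mult)
    have powr_shift: "2 powr ((real k - 2) / 2) = 2 powr (real k / 2) / (2::real)"
      by (simp add: diff_divide_distrib powr_diff)
    show ?thesis
      unfolding sqrt_f powr_shift two_pow by (simp add: field_simps)
  qed
  ultimately show ?thesis by simp
qed

lemma has_real_derivative_face_volume_edge_update:
  assumes "finite F" "card F = Suc k" "i < j"
  shows "((\<lambda>t. face_volume ((\<lambda>_. 1)((i,j) := t)) F) has_real_derivative
           1 / (fact k * sqrt (real k + 1) * 2 powr ((real k - 2) / 2)) * incid (i,j) F) (at 1)"
proof -
  define as where "as = sorted_list_of_set F"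
  have as: "length as = Suc k" "distinct as" "set as = F"
    using assms(1,2) unfolding as_def by auto
  have volume: "face_volume l F = sqrt (det (gram_of_lengths l as)) / fact k" for l
    unfolding face_volume_def as_def assms(2) by simp
  show ?thesis
  proof (cases "{i, j} \<subseteq> F")
    case True
    then obtain r s where rs: "r < Suc k" "s < Suc k" "as ! r = i" "as ! s = j"
      using as by (metis in_set_conv_nth insert_subset)
    have "r \<noteq> s" using rs assms(3) by auto
    have "(\<lambda>t. face_volume ((\<lambda>_. 1)((i,j) := t)) F)
        = (\<lambda>t. sqrt (det (gram_of_dists k (one_edge_dists r s t))) / fact k)"
      unfolding volume using gram_of_lengths_edge_update[OF as(2,1) rs(1,2)] rs assms(3) by simp
    moreover have "incid (i,j) F = 1" using True unfolding incid_def by simp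
    ultimately show ?thesis
      using has_real_derivative_sqrt_gram_volume det_gram_unit_dists
        has_real_derivative_det_gram_one_edge[OF \<open>r \<noteq> s\<close>] rs by simp
  next
    case False
    then have "(\<lambda>t. face_volume ((\<lambda>_. 1)((i,j) := t)) F)
        = (\<lambda>t. sqrt (det (gram_of_dists k (\<lambda>_ _. 1))) / fact k)"
      unfolding volume using gram_of_lengths_edge_update_outside[OF as(1) assms(3)] as(3) by simp
    moreover have "incid (i,j) F = 0" using False unfolding incid_def by simp
    ultimately show ?thesis by simp
  qed
qed

theorem lemma1:
  fixes n :: nat and e :: "nat \<times> nat" and F :: "nat set"
  assumes "n \<ge> 3" and "e \<in> edges n" and "F \<in> faces n"
  shows "((\<lambda>t. face_volume ((\<lambda>_. 1)(e := t)) F) has_real_derivative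
           (1 / (fact (n - 2) * sqrt (real n - 1) * 2 powr ((real n - 4) / 2))) * incid e F)
         (at 1)"
proof -
  define k where "k = n - 2"
  obtain i j where e: "e = (i, j)" and "i < j" using assms(2) unfolding edges_def by auto
  have "finite F" "card F = Suc k"
    using assms(1,3) finite_subset unfolding faces_def k_def by auto
  moreover have "1 / (fact (n - 2) * sqrt (real n - 1) * 2 powr ((real n - 4) / 2))
      = 1 / (fact k * sqrt (real k + 1) * 2 powr ((real k - 2) / 2))"
    using assms(1) unfolding k_def by (simp add: of_nat_diff algebra_simps)
  ultimately show ?thesis
    unfolding e using has_real_derivative_face_volume_edge_update[OF _ _ \<open>i < j\<close>] by simp
qed

end
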